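(* Let $s\in(0,1)$. Then there is a constant $C>0$ such that, as $\varepsilon\to0$, $$\int_{\mathbb{H}^N}|u_\varepsilon(\xi)|^2d\xi\ge O(\varepsilon^{Q-4s})+C\varepsilon^{2s}$$ and $$\int_{\mathbb{H}^N}|u_\varepsilon(\xi)|^{Q^*_s}d\xi=S_s^{\frac{Q}{2s}}+O(\varepsilon^{Q}).$$
   Context: $\mathbb{H}^N=\mathbb{R}^{2N+1}$ with group law $\xi\circ\xi'=(x+x',y+y',t+t'+2(x'\cdot y-y'\cdot x))$, Lebesgue measure, $Q=2N+2$, dilations $\delta_a(x,y,t)=(ax,ay,a^2t)$, homogeneous norm $|\xi|=((|x|^2+|y|^2)^2+t^2)^{1/4}$, balls $B_r(0)=\{|\xi|<r\}$, $Q^*_s=\frac{2Q}{Q-2s}$. $S_s>0$ is the sharp fractional Sobolev constant on $\mathbb{H}^N$. $U(x,y,t)=C_0(t^2+(1+|x|^2+|y|^2)^2)^{-\frac{Q-2s}{4}}$ ($C_0>0$), $\overline{u}=U/\|U\|_{L^{Q^*_s}(\mathbb{H}^N)}$, $u^*(\xi)=\overline{u}(\delta_{S_s^{-1/(2s)}}(\xi))$ (so that $\int|u^*|^{Q^*_s}=S_s^{Q/(2s)}$), $U_\varepsilon(\xi)=\varepsilon^{-\frac{Q-2s}{2}}u^*(\delta_{1/\varepsilon}(\xi))$. $\Omega\subseteq\mathbb{H}^N$ is bounded open, $r>0$ with $B_{4r}(0)\subset\Omega$, $\phi\in C^\infty(\mathbb{H}^N)$, $0\le\phi\le1$, $\phi=1$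 on $B_r(0)$, $\phi=0$ outside $B_{2r}(0)$, and $u_\varepsilon=U_\varepsilon\phi$. The first inequality means: there is a function $g(\varepsilon)=O(\varepsilon^{Q-4s})$ as $\varepsilon\to0$ with $\int|u_\varepsilon|^2\ge g(\varepsilon)+C\varepsilon^{2s}$. *)

theory Defs
  imports "HOL-Analysis.Analysis" "HOL-Library.Landau_Symbols"
begin

text \<open>Heisenberg group H^N = R^{2N+1}, points (x,y,t) with x,y in R^N (N = CARD('n)).\<close>
type_synonym 'n heis = "(real^'n) \<times> (real^'n) \<times> real"

definition heis_mult :: "'n::finite heis \<Rightarrow> 'n heis \<Rightarrow> 'n heis" where
  "heis_mult p q = (case p of (x,y,t) \<Rightarrow> case q of (x',y',t') \<Rightarrow>
     (x + x', y + y', t + t' + 2 * (x' \<bullet> y - y' \<bullet> x)))"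

definition hdim :: "'n::finite itself \<Rightarrow> real" where
  "hdim _ = 2 * real CARD('n) + 2"

definition crit_exp :: "'n::finite itself \<Rightarrow> real \<Rightarrow> real" where
  "crit_exp n s = 2 * hdim n / (hdim n - 2 * s)"

definition dil :: "real \<Rightarrow> 'n::finite heis \<Rightarrow> 'n heis" where
  "dil a p = (case p of (x,y,t) \<Rightarrow> (a *\<^sub>R x, a *\<^sub>R y, a\<^sup>2 * t))"

definition heis_norm :: "'n::finite heis \<Rightarrow> real" where
  "heis_norm p = (case p of (x,y,t) \<Rightarrow> ((norm x ^ 2 + norm y ^ 2)\<^sup>2 + t\<^sup>2) powr (1/4))"

definition hball :: "real \<Rightarrow> 'n::finite heis set" where
  "hball r = {p. heis_norm p < r}"

definition smooth_fun :: "('a::euclidean_space \<Rightarrow> real) \<Rightarrow> bool" where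
  "smooth_fun f \<longleftrightarrow> (\<exists>D :: 'a list \<Rightarrow> 'a \<Rightarrow> real.
      D [] = f \<and>
      (\<forall>bs. continuous_on UNIV (D bs)) \<and>
      (\<forall>bs b x. b \<in> Basis \<longrightarrow>
         ((\<lambda>h. D bs (x + h *\<^sub>R b)) has_real_derivative D (b # bs) x) (at 0)))"

definition U_fun :: "'n::finite itself \<Rightarrow> real \<Rightarrow> real \<Rightarrow> 'n heis \<Rightarrow> real" where
  "U_fun n C0 s p = (case p of (x,y,t) \<Rightarrow>
      C0 * (t\<^sup>2 + (1 + norm x ^ 2 + norm y ^ 2)\<^sup>2) powr (- (hdim n - 2 * s) / 4))"

definition ubar :: "'n::finite itself \<Rightarrow> real \<Rightarrow> real \<Rightarrow> 'n heis \<Rightarrow> real" where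
  "ubar n C0 s p = U_fun n C0 s p /
      (integral\<^sup>L lborel (\<lambda>q. \<bar>U_fun n C0 s q\<bar> powr crit_exp n s)) powr (1 / crit_exp n s)"

definition ustar :: "'n::finite itself \<Rightarrow> real \<Rightarrow> real \<Rightarrow> real \<Rightarrow> 'n heis \<Rightarrow> real" where
  "ustar n C0 s S p = ubar n C0 s (dil (S powr (- 1 / (2 * s))) p)"

definition U_eps :: "'n::finite itself \<Rightarrow> real \<Rightarrow> real \<Rightarrow> real \<Rightarrow> real \<Rightarrow> 'n heis \<Rightarrow> real" where
  "U_eps n C0 s S \<epsilon> p = \<epsilon> powr (- (hdim n - 2 * s) / 2) * ustar n C0 s S (dil (1 / \<epsilon>) p)"

definition u_eps :: "'n::finite itself \<Rightarrow> real \<Rightarrow> real \<Rightarrow> real \<Rightarrow> ('n heis \<Rightarrow> real)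
     \<Rightarrow> real \<Rightarrow> 'n heis \<Rightarrow> real" where
  "u_eps n C0 s S \<phi> \<epsilon> p = U_eps n C0 s S \<epsilon> p * \<phi> p"

end

theory Submission
  imports Defs
begin

text \<open>
  All estimates are reduced to the fixed profile U by the dilations \<delta>_a, which are linear
  with Jacobian a^Q and multiply the homogeneous norm by a.  With \<lambda> = S^(-1/(2s)) one has
  U_\<epsilon> = \<epsilon>^(-(Q-2s)/2) \<parallel>U\<parallel>_q^(-1) U \<circ> \<delta>_(\<lambda>/\<epsilon>) for q = Q*_s, hence
  \<integral> |U_\<epsilon>|^q = \<lambda>^(-Q) = S^(Q/(2s)) for every \<epsilon>.

  Since 0 \<le> \<phi> \<le> 1 and \<phi> = 1 on B_r, the second estimate is off by at most the tail
  \<integral>_{|\<xi>| \<ge> r} |U_\<epsilon>|^q.  Rescaling turns it into \<epsilon>^Q times a tail of U^q \<le> C0^q |\<xi>|^(-2Q),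
  and \<integral>_{|\<xi>| \<ge> R} |\<xi>|^(-2Q) = R^(-Q) \<integral>_{|\<xi>| \<ge> 1} |\<xi>|^(-2Q), which is finite by a
  decomposition into dyadic shells.

  For the first estimate, |u_\<epsilon>|^2 \<ge> U_\<epsilon>^2 on B_r, and rescaling gives
  \<integral>_{B_r} U_\<epsilon>^2 = c \<epsilon>^(2s) \<integral>_{B_(\<lambda>r/\<epsilon>)} U^2 with c independent of \<epsilon>; for \<epsilon> < 1 this is
  at least c \<epsilon>^(2s) \<integral>_{B_(\<lambda>r)} U^2.  So the lower bound holds even with g = 0.
\<close>

lemma emeasure_lborel_open_pos:
  fixes A :: "'a::euclidean_space set"
  assumes "open A" "A \<noteq> {}"
  shows "0 < emeasure lborel A"
proof -
  obtain x e where "0 < e" "ball x e \<subseteq> A"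
    using assms by (meson ex_in_conv openE)
  have "0 < emeasure lborel (ball x e)"
    using content_ball_pos[OF \<open>0 < e\<close>, of x] emeasure_lborel_ball_finite[of x e]
    by (simp add: emeasure_eq_ennreal_measure)
  also have "\<dots> \<le> emeasure lborel A"
    using \<open>ball x e \<subseteq> A\<close> by (intro emeasure_mono) (use assms(1) in auto)
  finally show ?thesis .
qed

lemma integral_pos_if_pos_on:
  fixes f :: "'a \<Rightarrow> real"
  assumes f: "integrable M f" "\<And>x. 0 \<le> f x"
    and A: "A \<in> sets M" "0 < emeasure M A" "\<And>x. x \<in> A \<Longrightarrow> 0 < f x"
  shows "0 < integral\<^sup>L M f"
proof (rule ccontr)
  assume "\<not> 0 < integral\<^sup>L M f"
  moreover have "0 \<le> integral\<^sup>L M f"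
    using f(2) by (simp add: integral_nonneg_AE)
  ultimately have "integral\<^sup>L M f = 0"
    by simp
  then have "AE x in M. f x = 0"
    using integral_nonneg_eq_0_iff_AE[OF f(1)] f(2) by simp
  then have "AE x in M. x \<notin> A"
    by (rule eventually_mono) (metis A(3) less_irrefl)
  then have "emeasure M A = 0"
    using AE_iff_null_sets[OF A(1)] by blast
  with A(2) show False by simp
qed

lemma integral_mult_cutoff_diff_le:
  fixes f g :: "'a::euclidean_space \<Rightarrow> real"
  assumes f: "integrable lborel f" "\<And>x. 0 \<le> f x"
    and g: "g \<in> borel_measurable borel" "\<And>x. 0 \<le> g x" "\<And>x. g x \<le> 1" "\<And>x. x \<in> A \<Longrightarrow> g x = 1"
    and A: "A \<in> sets borel"
  shows "\<bar>(\<integral>x. f x * g x \<partial>lborel) - integral\<^sup>L lborel f\<bar> \<le> (\<integral>x. f x * indicator (- A) x \<partial>lborel)"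
proof -
  have fg: "integrable lborel (\<lambda>x. f x * g x)"
  proof (rule Bochner_Integration.integrable_bound[OF f(1)])
    show "AE x in lborel. norm (f x * g x) \<le> norm (f x)"
      using f(2) g(2,3) by (intro AE_I2) (simp add: abs_mult mult_left_le)
  qed (use f(1) g(1) in simp)
  have fA: "integrable lborel (\<lambda>x. f x * indicator (- A) x)"
    using A by (intro integrable_real_mult_indicator f(1)) auto
  have "integral\<^sup>L lborel f - (\<integral>x. f x * g x \<partial>lborel) = (\<integral>x. f x * (1 - g x) \<partial>lborel)"
    using f(1) fg by (simp add: right_diff_distrib)
  moreover have "0 \<le> (\<integral>x. f x * (1 - g x) \<partial>lborel)"
    using f(2) g(3) by (intro integral_nonneg_AE AE_I2) simp
  moreover have "(\<integral>x. f x * (1 - g x) \<partial>lborel) \<le> (\<integral>x. f x * indicator (- A) x \<partial>lborel)"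
  proof (rule integral_mono)
    show "integrable lborel (\<lambda>x. f x * (1 - g x))"
      using f(1) fg by (simp add: right_diff_distrib)
    show "f x * (1 - g x) \<le> f x * indicator (- A) x" for x
      using f(2)[of x] g(2,4)[of x] by (cases "x \<in> A") (auto simp: mult_left_le)
  qed (rule fA)
  ultimately show ?thesis
    by linarith
qed

lemma measurable_smooth_fun: "smooth_fun f \<Longrightarrow> f \<in> borel_measurable borel"
  unfolding smooth_fun_def by (metis borel_measurable_continuous_onI)

section \<open>The homogeneous norm and its balls\<close>

lemma heis_norm_eq_root:
  "heis_norm (x, y, t) = root 4 ((norm x ^ 2 + norm y ^ 2)\<^sup>2 + t\<^sup>2)"
  by (simp add: heis_norm_def root_powr_inverse)

lemma heis_norm_power4: "heis_norm (x, y, t) ^ 4 = (norm x ^ 2 + norm y ^ 2)\<^sup>2 + t\<^sup>2"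
  by (simp add: heis_norm_eq_root real_root_pow_pos2)

lemma heis_norm_nonneg: "0 \<le> heis_norm p"
  by (cases p) (simp add: heis_norm_eq_root)

lemma continuous_heis_norm: "continuous_on UNIV (heis_norm :: 'n::finite heis \<Rightarrow> real)"
proof -
  have eq: "heis_norm = (\<lambda>p :: 'n heis.
             root 4 ((norm (fst p) ^ 2 + norm (fst (snd p)) ^ 2)\<^sup>2 + (snd (snd p))\<^sup>2))"
    by (simp add: fun_eq_iff split_beta heis_norm_eq_root)
  show ?thesis
    unfolding eq by (intro continuous_intros)
qed

lemma measurable_heis_norm [measurable]:
  "heis_norm \<in> borel_measurable (borel :: 'n::finite heis measure)"
  by (rule borel_measurable_continuous_onI[OF continuous_heis_norm])

lemma heis_norm_dil:
  assumes "0 < a"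
  shows "heis_norm (dil a p) = a * heis_norm p"
proof (cases p)
  case (fields x y t)
  have "(norm (a *\<^sub>R x) ^ 2 + norm (a *\<^sub>R y) ^ 2)\<^sup>2 + (a\<^sup>2 * t)\<^sup>2
        = a ^ 4 * ((norm x ^ 2 + norm y ^ 2)\<^sup>2 + t\<^sup>2)"
    using assms by (simp add: power_mult_distrib power2_eq_square power4_eq_xxxx algebra_simps)
  then show ?thesis
    using assms
    by (simp add: fields dil_def heis_norm_eq_root real_root_mult real_root_power_cancel)
qed

lemma dil_dil: "dil a (dil b p) = dil (a * b) p"
  by (cases p) (simp add: dil_def power_mult_distrib)

lemma open_hball: "open (hball r :: 'n::finite heis set)"
  unfolding hball_def by (rule open_Collect_less[OF continuous_heis_norm continuous_on_const])

lemma sets_hball [measurable]: "hball r \<in> sets (borel :: 'n::finite heis measure)"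
  unfolding hball_def by measurable

lemma zero_in_hball: "0 < r \<Longrightarrow> (0 :: 'n::finite heis) \<in> hball r"
  by (simp add: hball_def zero_prod_def heis_norm_eq_root)

lemma dil_in_hball_iff: "0 < a \<Longrightarrow> dil a p \<in> hball r \<longleftrightarrow> p \<in> hball (r / a)"
  by (simp add: hball_def heis_norm_dil field_simps mult.commute)

lemma indicator_hball_dil:
  "0 < c \<Longrightarrow> indicator (hball (c * r)) (dil c p) = (indicator (hball r) p :: real)"
  "0 < c \<Longrightarrow> indicator (- hball (c * r)) (dil c p) = (indicator (- hball r) p :: real)"
  by (simp_all add: indicator_def dil_in_hball_iff)

lemma norm_le_heis_norm:
  fixes x y :: "real^'n::finite" and t :: real
  shows "norm (x, y, t) \<le> heis_norm (x, y, t) + heis_norm (x, y, t) ^ 2"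
proof -
  define h where "h = heis_norm (x, y, t)"
  have h4: "h ^ 4 = (norm x ^ 2 + norm y ^ 2)\<^sup>2 + t\<^sup>2"
    unfolding h_def by (rule heis_norm_power4)
  have h0: "0 \<le> h"
    unfolding h_def by (rule heis_norm_nonneg)
  have A: "norm x ^ 2 + norm y ^ 2 \<le> h ^ 2"
  proof (rule power2_le_imp_le)
    show "(norm x ^ 2 + norm y ^ 2)\<^sup>2 \<le> (h ^ 2)\<^sup>2"
      using h4 by (simp flip: power_mult)
  qed simp
  have T: "t\<^sup>2 \<le> h ^ 4"
    using h4 by simp
  have "norm (x, y, t) ^ 2 = norm x ^ 2 + norm y ^ 2 + t\<^sup>2"
    by (simp add: norm_Pair)
  also have "\<dots> \<le> h ^ 2 + h ^ 4"
    using A T by linarith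
  also have "\<dots> \<le> h ^ 2 + h ^ 4 + 2 * h ^ 3"
    using h0 by simp
  also have "\<dots> = (h + h ^ 2)\<^sup>2"
    by algebra
  finally have "norm (x, y, t) ^ 2 \<le> (h + h ^ 2)\<^sup>2" .
  then have "norm (x, y, t) \<le> h + h ^ 2"
    by (rule power2_le_imp_le) (use h0 in simp)
  then show ?thesis
    by (simp add: h_def)
qed

lemma bounded_hball: "bounded (hball r :: 'n::finite heis set)"
proof -
  have "norm p \<le> \<bar>r\<bar> + r\<^sup>2" if "p \<in> hball r" for p :: "'n heis"
  proof (cases p)
    case (fields x y t)
    have "heis_norm p < r"
      using that by (simp add: hball_def)
    then have "heis_norm p + heis_norm p ^ 2 \<le> \<bar>r\<bar> + r\<^sup>2"
      using heis_norm_nonneg[of p] by (intro add_mono power_mono) auto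
    then show ?thesis
      using norm_le_heis_norm[of x y t] by (simp add: fields)
  qed
  then show ?thesis
    unfolding bounded_iff by blast
qed

section \<open>Dilations and Lebesgue measure\<close>

lemma hdim_eq: "hdim TYPE('n::finite) = real (2 * CARD('n) + 2)"
  by (simp add: hdim_def)

lemma hdim_ge_4: "4 \<le> hdim TYPE('n::finite)"
  using finite_UNIV_card_ge_0[where 'a = 'n] by (simp add: hdim_def)

definition dil_coeff :: "real \<Rightarrow> 'n::finite heis \<Rightarrow> real" where
  "dil_coeff a b = (if snd (snd b) = 0 then a else a\<^sup>2)"

lemma dil_eq_sum_Basis:
  fixes p :: "'n::finite heis"
  shows "dil a p = (\<Sum>b\<in>Basis. (dil_coeff a b * (p \<bullet> b)) *\<^sub>R b)"
proof (rule euclidean_eqI)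
  fix b :: "'n::finite heis" assume b: "b \<in> Basis"
  then have "(\<Sum>j\<in>Basis. (dil_coeff a j * (p \<bullet> j)) *\<^sub>R j) \<bullet> b = dil_coeff a b * (p \<bullet> b)"
    by (simp add: inner_sum_left inner_Basis if_distrib cong: if_cong)
  moreover have "dil a p \<bullet> b = dil_coeff a b * (p \<bullet> b)"
    using b by (cases p) (auto simp: dil_def dil_coeff_def Basis_prod_def inner_prod_def)
  ultimately show "dil a p \<bullet> b = (\<Sum>j\<in>Basis. (dil_coeff a j * (p \<bullet> j)) *\<^sub>R j) \<bullet> b"
    by simp
qed

lemma measurable_dil [measurable]: "dil a \<in> borel \<rightarrow>\<^sub>M (borel :: 'n::finite heis measure)"
  unfolding dil_eq_sum_Basis[abs_def] by measurable

lemma prod_dil_coeff: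
  assumes "0 < a"
  shows "(\<Prod>b\<in>(Basis :: 'n::finite heis set). \<bar>dil_coeff a b\<bar>) = a powr hdim TYPE('n)"
proof -
  let ?t = "(0, 0, 1) :: 'n heis"
  have t: "?t \<in> Basis"
    by (simp add: Basis_prod_def)
  have "(\<Prod>b\<in>(Basis :: 'n heis set). \<bar>dil_coeff a b\<bar>)
        = \<bar>dil_coeff a ?t\<bar> * (\<Prod>b\<in>Basis - {?t}. \<bar>dil_coeff a b\<bar>)"
    by (rule prod.remove[OF finite_Basis t])
  also have "\<bar>dil_coeff a ?t\<bar> = a ^ 2"
    by (simp add: dil_coeff_def)
  also have "(\<Prod>b\<in>Basis - {?t}. \<bar>dil_coeff a b\<bar>) = (\<Prod>b\<in>(Basis :: 'n heis set) - {?t}. a)"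
    using assms by (intro prod.cong) (auto simp: dil_coeff_def Basis_prod_def)
  also have "\<dots> = a ^ (2 * CARD('n))"
    using t by (simp add: card_Diff_singleton mult_2)
  also have "a ^ 2 * a ^ (2 * CARD('n)) = a powr hdim TYPE('n)"
    unfolding hdim_eq powr_realpow[OF assms] power_add by (rule mult.commute)
  finally show ?thesis .
qed

lemma lborel_eq_density_dil:
  assumes "0 < a"
  shows "(lborel :: 'n::finite heis measure)
           = density (distr lborel borel (dil a)) (\<lambda>_. ennreal (a powr hdim TYPE('n)))"
proof -
  have "\<And>b. b \<in> Basis \<Longrightarrow> dil_coeff a b \<noteq> 0"
    using assms by (simp add: dil_coeff_def)
  from lborel_affine_euclidean[where c = "dil_coeff a" and t = 0, OF this] show ?thesis
    by (simp add: dil_eq_sum_Basis[symmetric, abs_def] prod_dil_coeff[OF assms])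
qed

lemma integral_dil:
  fixes f :: "'n::finite heis \<Rightarrow> real"
  assumes [measurable]: "f \<in> borel_measurable borel" and "0 < a"
  shows "(\<integral>p. f (dil a p) \<partial>lborel) = a powr - hdim TYPE('n) * integral\<^sup>L lborel f"
proof -
  have "integral\<^sup>L lborel f = (\<integral>p. a powr hdim TYPE('n) * f p \<partial>distr lborel borel (dil a))"
    by (subst lborel_eq_density_dil[OF \<open>0 < a\<close>]) (simp add: integral_density)
  also have "\<dots> = a powr hdim TYPE('n) * (\<integral>p. f (dil a p) \<partial>lborel)"
    by (simp add: integral_distr)
  finally show ?thesis
    using \<open>0 < a\<close> by (simp add: powr_minus field_simps)
qed

lemma integrable_dil_iff:
  fixes f :: "'n::finite heis \<Rightarrow> real"
  assumes [measurable]: "f \<in> borel_measurable borel" and "0 < a"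
  shows "integrable lborel (\<lambda>p. f (dil a p)) \<longleftrightarrow> integrable lborel f"
proof -
  have "integrable lborel f \<longleftrightarrow>
        integrable (distr lborel borel (dil a)) (\<lambda>p. a powr hdim TYPE('n) *\<^sub>R f p)"
    by (subst lborel_eq_density_dil[OF \<open>0 < a\<close>]) (simp add: integrable_density)
  also have "\<dots> \<longleftrightarrow> integrable lborel (\<lambda>p. a powr hdim TYPE('n) *\<^sub>R f (dil a p))"
    by (simp add: integrable_distr_eq)
  finally show ?thesis
    using \<open>0 < a\<close> by simp
qed

lemma integral_dil_mult_indicator_hball:
  fixes f :: "'n::finite heis \<Rightarrow> real"
  assumes [measurable]: "f \<in> borel_measurable borel" and "0 < c"
  shows "(\<integral>p. f (dil c p) * indicator (hball r) p \<partial>lborel)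
           = c powr - hdim TYPE('n) * (\<integral>p. f p * indicator (hball (c * r)) p \<partial>lborel)"
    and "(\<integral>p. f (dil c p) * indicator (- hball r) p \<partial>lborel)
           = c powr - hdim TYPE('n) * (\<integral>p. f p * indicator (- hball (c * r)) p \<partial>lborel)"
  using integral_dil[of "\<lambda>p. f p * indicator (hball (c * r)) p" c]
    integral_dil[of "\<lambda>p. f p * indicator (- hball (c * r)) p" c] \<open>0 < c\<close>
  by (simp_all add: indicator_hball_dil)

lemma emeasure_hball:
  assumes "0 < r"
  shows "emeasure lborel (hball r :: 'n::finite heis set)
           = ennreal (r powr hdim TYPE('n)) * emeasure lborel (hball 1 :: 'n heis set)"
proof -
  have "dil r -` hball r = (hball 1 :: 'n heis set)"
    using assms by (simp add: set_eq_iff dil_in_hball_iff)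
  have "emeasure lborel (hball r :: 'n heis set)
        = ennreal (r powr hdim TYPE('n))
            * emeasure (distr lborel borel (dil r)) (hball r :: 'n heis set)"
    by (subst lborel_eq_density_dil[OF assms])
       (simp add: emeasure_density nn_integral_cmult_indicator)
  also have "emeasure (distr lborel borel (dil r)) (hball r :: 'n heis set)
             = emeasure lborel (hball 1 :: 'n heis set)"
    using \<open>dil r -` hball r = hball 1\<close> by (simp add: emeasure_distr)
  finally show ?thesis .
qed

lemma nn_integral_cmult_indicator_hball:
  assumes "0 \<le> a" "0 < R"
  shows "(\<integral>\<^sup>+p. ennreal a * indicator (hball R) (p :: 'n::finite heis) \<partial>lborel)
           = ennreal (a * R powr hdim TYPE('n)) * emeasure lborel (hball 1 :: 'n heis set)"
proof -
  have "(\<integral>\<^sup>+p. ennreal a * indicator (hball R) (p :: 'n heis) \<partial>lborel)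
        = ennreal a * emeasure lborel (hball R :: 'n heis set)"
    by (rule nn_integral_cmult_indicator) simp
  also have "\<dots> = ennreal a * (ennreal (R powr hdim TYPE('n)) * emeasure lborel (hball 1 :: 'n heis set))"
    by (simp only: emeasure_hball[OF assms(2)])
  also have "\<dots> = ennreal (a * R powr hdim TYPE('n)) * emeasure lborel (hball 1 :: 'n heis set)"
    using assms(1) by (simp only: ennreal_mult' mult.assoc)
  finally show ?thesis .
qed

lemma emeasure_hball_pos: "0 < r \<Longrightarrow> 0 < emeasure lborel (hball r :: 'n::finite heis set)"
  using zero_in_hball by (intro emeasure_lborel_open_pos open_hball) blast

lemma emeasure_hball_finite: "emeasure lborel (hball r :: 'n::finite heis set) < \<infinity>"
  by (rule emeasure_bounded_finite[OF bounded_hball])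

lemma integrable_bounded_on_hball:
  fixes f :: "'n::finite heis \<Rightarrow> real"
  assumes [measurable]: "f \<in> borel_measurable borel"
    and "\<And>p. \<bar>f p\<bar> \<le> B" "\<And>p. p \<notin> hball R \<Longrightarrow> f p = 0"
  shows "integrable lborel f"
proof (rule Bochner_Integration.integrable_bound)
  show "integrable lborel (\<lambda>p :: 'n heis. B * indicator (hball R) p)"
    using emeasure_hball_finite[of R, where 'n = 'n] by simp
  show "AE p in lborel. norm (f p) \<le> norm (B * indicator (hball R) p)"
  proof (rule AE_I2)
    fix p
    show "norm (f p) \<le> norm (B * indicator (hball R) p)"
      using assms(2,3)[of p] by (cases "p \<in> hball R") auto
  qed
qed simp

section \<open>Powers of the norm at infinity\<close>

lemma dyadic_bracket:
  assumes "1 \<le> h"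
  obtains k :: nat where "2 powr k \<le> h" "h < 2 powr real (k + 1)"
proof
  let ?k = "nat \<lfloor>log 2 h\<rfloor>"
  have "0 \<le> log 2 h"
    using assms by simp
  then have "real ?k \<le> log 2 h" "log 2 h < real ?k + 1"
    by linarith+
  then show "2 powr ?k \<le> h" "h < 2 powr (?k + 1)"
    using le_log_iff[of 2 h "real ?k"] log_less_iff[of 2 h "real ?k + 1"] assms
    by (auto simp: add.commute)
qed

lemma heis_norm_powr_outside_hball1_le_dyadic_sum:
  assumes "0 \<le> e"
  shows "ennreal (indicator (- hball 1) p * heis_norm p powr - e)
           \<le> (\<Sum>k. ennreal (2 powr (- e * real k)) * indicator (hball (2 powr real (k + 1))) p)"
    (is "_ \<le> (\<Sum>k. ?F k)")
proof (cases "1 \<le> heis_norm p")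
  case True
  then obtain k :: nat where k: "2 powr k \<le> heis_norm p" "heis_norm p < 2 powr real (k + 1)"
    by (rule dyadic_bracket)
  have "heis_norm p powr - e \<le> (2 powr k) powr - e"
    using k assms by (intro powr_mono2') auto
  then have "ennreal (indicator (- hball 1) p * heis_norm p powr - e) \<le> ?F k"
    using k True
    by (auto simp: hball_def indicator_def powr_powr mult.commute add.commute intro!: ennreal_leI)
  also have "\<dots> = (\<Sum>i\<in>{k}. ?F i)"
    by (simp only: sum.insert finite.emptyI empty_iff not_False_eq_True sum.empty add_0_right)
  also have "\<dots> \<le> (\<Sum>k. ?F k)"
    by (rule sum_le_suminf) auto
  finally show ?thesis .
qed (simp add: hball_def)

lemma integrable_heis_norm_powr_outside_hball1:
  assumes "hdim TYPE('n::finite) < e"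
  shows "integrable lborel (\<lambda>p :: 'n heis. indicator (- hball 1) p * heis_norm p powr - e)"
proof (rule integrableI_nonneg)
  let ?Q = "hdim TYPE('n)" and ?B1 = "emeasure lborel (hball 1 :: 'n heis set)"
  define \<rho> :: real where "\<rho> = 2 powr (?Q - e)"
  have \<rho>: "0 < \<rho>" "\<rho> < 1"
    using assms by (simp_all add: \<rho>_def powr_less_one)
  define F where "F k p = ennreal (2 powr (- e * real k)) * indicator (hball (2 powr real (k + 1))) p"
    for k :: nat and p :: "'n heis"
  have shell_measure: "(\<integral>\<^sup>+p. F k p \<partial>lborel) = ennreal (2 powr ?Q * \<rho> ^ k) * ?B1" for k
  proof -
    have "- e * k + (k + 1) * ?Q = ?Q + k * (?Q - e)"
      by (simp add: algebra_simps)
    then have "2 powr (- e * real k) * (2 powr (k + 1)) powr ?Q = 2 powr ?Q * 2 powr (k * (?Q - e))"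
      unfolding powr_powr powr_add[symmetric] by simp
    also have "\<dots> = 2 powr ?Q * \<rho> ^ k"
      by (simp add: \<rho>_def powr_power)
    finally have scale: "2 powr (- e * real k) * (2 powr (k + 1)) powr ?Q = 2 powr ?Q * \<rho> ^ k" .
    have "(\<integral>\<^sup>+p. F k p \<partial>lborel) = ennreal (2 powr (- e * real k) * (2 powr (k + 1)) powr ?Q) * ?B1"
      unfolding F_def by (rule nn_integral_cmult_indicator_hball) simp_all
    then show ?thesis
      unfolding scale .
  qed
  have "(\<integral>\<^sup>+p. ennreal (indicator (- hball 1) p * heis_norm (p :: 'n heis) powr - e) \<partial>lborel)
        \<le> (\<integral>\<^sup>+p. (\<Sum>k. F k p) \<partial>lborel)"
  proof (rule nn_integral_mono)
    have "0 \<le> e"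
      using assms by (simp add: hdim_def)
    then show "ennreal (indicator (- hball 1) p * heis_norm p powr - e) \<le> (\<Sum>k. F k p)" for p
      using heis_norm_powr_outside_hball1_le_dyadic_sum[of e p] by (simp add: F_def)
  qed
  also have "\<dots> = (\<Sum>k. \<integral>\<^sup>+p. F k p \<partial>lborel)"
    by (rule nn_integral_suminf) (simp add: F_def)
  also have "\<dots> = (\<Sum>k. ennreal (2 powr ?Q * \<rho> ^ k) * ?B1)"
    by (simp only: shell_measure)
  also have "\<dots> = ennreal (\<Sum>k. 2 powr ?Q * \<rho> ^ k) * ?B1"
    using \<rho> by (simp add: ennreal_suminf_cmult suminf_ennreal2 summable_geometric)
  also have "\<dots> < \<infinity>"
    using emeasure_hball_finite[where 'n = 'n] by (simp add: ennreal_mult_less_top)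
  finally show "(\<integral>\<^sup>+p. ennreal (indicator (- hball 1) p * heis_norm (p :: 'n heis) powr - e)
                 \<partial>lborel) < \<infinity>" .
qed (auto simp: hball_def)

lemma integral_heis_norm_powr_outside_hball:
  fixes e R :: real
  assumes "0 < R"
  defines "g \<equiv> \<lambda>R (p :: 'n::finite heis). indicator (- hball R) p * heis_norm p powr - e"
  shows "integral\<^sup>L lborel (g R) = R powr (hdim TYPE('n) - e) * integral\<^sup>L lborel (g 1)"
    and "hdim TYPE('n) < e \<Longrightarrow> integrable lborel (g R)"
proof -
  have [measurable]: "g 1 \<in> borel_measurable borel"
    unfolding g_def by measurable
  have "g R p = R powr - e * g 1 (dil (1 / R) p)" for p
    using assms(1) indicator_hball_dil(2)[of "1 / R" R p]
    by (simp add: g_def heis_norm_dil powr_divide heis_norm_nonneg powr_minus field_simps)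
  then have g_R: "g R = (\<lambda>p. R powr - e * g 1 (dil (1 / R) p))"
    by (rule ext)
  show "integral\<^sup>L lborel (g R) = R powr (hdim TYPE('n) - e) * integral\<^sup>L lborel (g 1)"
    using assms(1) by (simp add: g_R integral_dil powr_minus_divide powr_divide powr_diff)
  show "integrable lborel (g R)" if "hdim TYPE('n) < e"
    using integrable_heis_norm_powr_outside_hball1[OF that] assms(1)
    by (simp add: g_R integrable_dil_iff) (simp add: g_def)
qed

section \<open>The bubble\<close>

lemma crit_exp_pos: "2 * s < hdim n \<Longrightarrow> 0 < crit_exp n s"
  by (simp add: crit_exp_def hdim_def)

lemma crit_exp_mult: "2 * s < hdim n \<Longrightarrow> (hdim n - 2 * s) * crit_exp n s = 2 * hdim n"
  by (simp add: crit_exp_def)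

lemma one_le_U_fun_base: "1 \<le> t\<^sup>2 + (1 + norm x ^ 2 + norm y ^ 2)\<^sup>2"
proof -
  have "1 \<le> 1 + norm x ^ 2 + norm y ^ 2"
    by simp
  then have "1 \<le> (1 + norm x ^ 2 + norm y ^ 2)\<^sup>2"
    by (rule one_le_power)
  then show ?thesis
    by (simp add: add_increasing)
qed

lemma U_fun_pos:
  assumes "0 < C0"
  shows "0 < U_fun n C0 s p"
proof (cases p)
  case (fields x y t)
  have "t\<^sup>2 + (1 + norm x ^ 2 + norm y ^ 2)\<^sup>2 \<noteq> 0"
    using one_le_U_fun_base[of t x y] by linarith
  then show ?thesis
    using assms by (simp add: fields U_fun_def)
qed

lemma U_fun_le:
  assumes "0 < C0" "2 * s \<le> hdim n"
  shows "U_fun n C0 s p \<le> C0"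
proof (cases p)
  case (fields x y t)
  have powr_le_1: "D powr a \<le> 1" if "1 \<le> D" "a \<le> 0" for D a :: real
    using powr_mono[OF that(2) that(1)] that(1) by simp
  have "(t\<^sup>2 + (1 + norm x ^ 2 + norm y ^ 2)\<^sup>2) powr (- (hdim n - 2 * s) / 4) \<le> 1"
    using assms(2) by (intro powr_le_1 one_le_U_fun_base) simp
  then show ?thesis
    using assms(1) by (simp add: fields U_fun_def mult_left_le)
qed

lemma U_fun_sq_le:
  assumes "0 < C0" "2 * s \<le> hdim n"
  shows "(U_fun n C0 s p)\<^sup>2 \<le> C0\<^sup>2"
  using U_fun_pos[OF assms(1), of n s p] U_fun_le[OF assms, of p] by (intro power_mono) auto

lemma U_fun_le_heis_norm_powr:
  assumes "0 < C0" "2 * s \<le> hdim n" "0 < heis_norm p"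
  shows "U_fun n C0 s p \<le> C0 * heis_norm p powr - (hdim n - 2 * s)"
proof (cases p)
  case (fields x y t)
  let ?a = "- (hdim n - 2 * s) / 4"
  have "(norm x ^ 2 + norm y ^ 2)\<^sup>2 \<le> (1 + norm x ^ 2 + norm y ^ 2)\<^sup>2"
    by (rule power_mono) auto
  then have "heis_norm p ^ 4 \<le> t\<^sup>2 + (1 + norm x ^ 2 + norm y ^ 2)\<^sup>2"
    by (simp add: fields heis_norm_power4)
  then have "(t\<^sup>2 + (1 + norm x ^ 2 + norm y ^ 2)\<^sup>2) powr ?a \<le> (heis_norm p ^ 4) powr ?a"
    using assms by (intro powr_mono2') auto
  also have "(heis_norm p ^ 4) powr ?a = heis_norm p powr (4 * ?a)"
    using assms(3) by (simp add: powr_powr flip: powr_numeral)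
  also have "4 * ?a = - (hdim n - 2 * s)"
    by simp
  finally show ?thesis
    using assms(1) by (simp add: fields U_fun_def)
qed

lemma measurable_U_fun [measurable]: "U_fun n C0 s \<in> borel_measurable borel"
proof (rule borel_measurable_continuous_onI)
  have U_eq: "U_fun n C0 s = (\<lambda>p. C0 *
      ((snd (snd p))\<^sup>2 + (1 + norm (fst p) ^ 2 + norm (fst (snd p)) ^ 2)\<^sup>2) powr (- (hdim n - 2 * s) / 4))"
    by (simp add: fun_eq_iff U_fun_def split_beta)
  show "continuous_on UNIV (U_fun n C0 s)"
    unfolding U_eq by (intro continuous_intros) (metis one_le_U_fun_base not_one_le_zero)
qed

lemma integrable_U_fun_sq_hball:
  assumes "0 < C0" "2 * s \<le> hdim TYPE('n::finite)"
  shows "integrable lborel (\<lambda>p :: 'n heis. (U_fun TYPE('n) C0 s p)\<^sup>2 * indicator (hball R) p)"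
  using U_fun_sq_le[OF assms]
  by (intro integrable_bounded_on_hball[where B = "C0\<^sup>2" and R = R]) (auto simp: indicator_def)

lemma integral_U_fun_sq_hball_mono:
  assumes "0 < C0" "2 * s \<le> hdim TYPE('n::finite)" "R \<le> R'"
  shows "(\<integral>p. (U_fun TYPE('n) C0 s p)\<^sup>2 * indicator (hball R) (p :: 'n heis) \<partial>lborel)
           \<le> (\<integral>p. (U_fun TYPE('n) C0 s p)\<^sup>2 * indicator (hball R') p \<partial>lborel)"
proof (intro integral_mono integrable_U_fun_sq_hball[OF assms(1,2)])
  have "hball R \<subseteq> (hball R' :: 'n heis set)"
    using assms(3) by (auto simp: hball_def)
  then show "(U_fun TYPE('n) C0 s p)\<^sup>2 * indicator (hball R) p
             \<le> (U_fun TYPE('n) C0 s p)\<^sup>2 * indicator (hball R') p" for p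
    by (intro mult_left_mono) (auto simp: indicator_def)
qed

lemma U_fun_powr_crit_exp_le:
  assumes "0 < C0" "2 * s < hdim n"
  shows "U_fun n C0 s p powr crit_exp n s \<le> C0 powr crit_exp n s"
    and "0 < heis_norm p \<Longrightarrow>
           U_fun n C0 s p powr crit_exp n s \<le> C0 powr crit_exp n s * heis_norm p powr - (2 * hdim n)"
proof -
  let ?q = "crit_exp n s"
  have q: "0 \<le> ?q"
    using crit_exp_pos[OF assms(2)] by simp
  show "U_fun n C0 s p powr ?q \<le> C0 powr ?q"
    using assms(2) U_fun_pos[OF assms(1), of n s p]
    by (intro powr_mono2 q U_fun_le[OF assms(1)]) auto
  assume "0 < heis_norm p"
  then have "U_fun n C0 s p powr ?q \<le> (C0 * heis_norm p powr - (hdim n - 2 * s)) powr ?q"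
    using assms(2) U_fun_pos[OF assms(1), of n s p]
    by (intro powr_mono2 q U_fun_le_heis_norm_powr[OF assms(1)]) auto
  also have "\<dots> = C0 powr ?q * heis_norm p powr (- (hdim n - 2 * s) * ?q)"
    using assms(1) by (simp add: powr_mult powr_powr)
  also have "- (hdim n - 2 * s) * ?q = - (2 * hdim n)"
    by (simp only: mult_minus_left crit_exp_mult[OF assms(2)])
  finally show "U_fun n C0 s p powr ?q \<le> C0 powr ?q * heis_norm p powr - (2 * hdim n)" .
qed

lemma integrable_U_fun_powr_crit_exp:
  assumes "0 < C0" "2 * s < hdim TYPE('n::finite)"
  shows "integrable lborel (\<lambda>p :: 'n heis. U_fun TYPE('n) C0 s p powr crit_exp TYPE('n) s)"
proof (rule Bochner_Integration.integrable_bound)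
  let ?Q = "hdim TYPE('n)" and ?c = "C0 powr crit_exp TYPE('n) s"
  show "integrable lborel (\<lambda>p :: 'n heis.
          ?c * (indicator (hball 1) p + indicator (- hball 1) p * heis_norm p powr - (2 * ?Q)))"
    using emeasure_hball_finite[of 1, where 'n = 'n] assms(2)
      integral_heis_norm_powr_outside_hball(2)[of 1 "2 * ?Q", where 'n = 'n]
    by (intro integrable_mult_right integrable_add) (auto simp: hdim_def)
  show "AE p in lborel. norm (U_fun TYPE('n) C0 s p powr crit_exp TYPE('n) s)
          \<le> norm (?c * (indicator (hball 1) p + indicator (- hball 1) p * heis_norm p powr - (2 * ?Q)))"
  proof (rule AE_I2)
    fix p :: "'n heis"
    show "norm (U_fun TYPE('n) C0 s p powr crit_exp TYPE('n) s)
          \<le> norm (?c * (indicator (hball 1) p + indicator (- hball 1) p * heis_norm p powr - (2 * ?Q)))"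
      using U_fun_powr_crit_exp_le[OF assms, of p]
      by (cases "p \<in> hball 1") (auto simp: hball_def)
  qed
qed simp

lemma integral_U_fun_powr_outside_hball_le:
  assumes "0 < C0" "2 * s < hdim TYPE('n::finite)" "0 < R"
  shows "(\<integral>p. U_fun TYPE('n) C0 s p powr crit_exp TYPE('n) s * indicator (- hball R) p \<partial>lborel)
           \<le> C0 powr crit_exp TYPE('n) s
             * (\<integral>p. indicator (- hball 1) p * heis_norm (p :: 'n heis) powr - (2 * hdim TYPE('n)) \<partial>lborel)
             * R powr - hdim TYPE('n)"
proof -
  let ?Q = "hdim TYPE('n)" and ?q = "crit_exp TYPE('n) s"
  let ?g = "\<lambda>R p. indicator (- hball R) p * heis_norm (p :: 'n heis) powr - (2 * ?Q)"
  have Q: "?Q < 2 * ?Q"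
    by (simp add: hdim_def)
  have "(\<integral>p. U_fun TYPE('n) C0 s p powr ?q * indicator (- hball R) p \<partial>lborel)
        \<le> (\<integral>p. C0 powr ?q * ?g R p \<partial>lborel)"
  proof (rule integral_mono)
    show "integrable lborel (\<lambda>p. U_fun TYPE('n) C0 s p powr ?q * indicator (- hball R) p)"
      using integrable_U_fun_powr_crit_exp[OF assms(1,2)]
      by (rule integrable_real_mult_indicator[rotated]) simp
    show "integrable lborel (\<lambda>p. C0 powr ?q * ?g R p)"
      using integral_heis_norm_powr_outside_hball(2)[OF assms(3) Q] by simp
    show "U_fun TYPE('n) C0 s p powr ?q * indicator (- hball R) p \<le> C0 powr ?q * ?g R p" for p
      using U_fun_powr_crit_exp_le(2)[OF assms(1,2), of p] assms(3)
      by (cases "p \<in> hball R") (auto simp: hball_def)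
  qed
  also have "\<dots> = C0 powr ?q * (integral\<^sup>L lborel (?g 1) * R powr - ?Q)"
    using integral_heis_norm_powr_outside_hball(1)[OF assms(3), of "2 * ?Q", where 'n = 'n] by simp
  finally show ?thesis
    by (simp add: mult.assoc)
qed

definition U_mass :: "'n::finite itself \<Rightarrow> real \<Rightarrow> real \<Rightarrow> real" where
  "U_mass n C0 s = integral\<^sup>L lborel (\<lambda>p :: 'n heis. \<bar>U_fun n C0 s p\<bar> powr crit_exp n s)"

lemma U_mass_eq:
  assumes "0 < C0"
  shows "U_mass n C0 s = (\<integral>p. U_fun n C0 s p powr crit_exp n s \<partial>lborel)"
  unfolding U_mass_def
  by (intro Bochner_Integration.integral_cong refl) (metis U_fun_pos[OF assms] abs_of_pos)

lemma U_mass_pos: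
  assumes "0 < C0" "2 * s < hdim TYPE('n::finite)"
  shows "0 < U_mass TYPE('n) C0 s"
  unfolding U_mass_eq[OF assms(1)]
proof (rule integral_pos_if_pos_on)
  show "0 < U_fun TYPE('n) C0 s p powr crit_exp TYPE('n) s" for p
    using U_fun_pos[OF assms(1), of "TYPE('n)" s p] by simp
qed (use integrable_U_fun_powr_crit_exp[OF assms] emeasure_hball_pos[of 1, where 'n = 'n] in auto)

section \<open>The rescaled bubbles\<close>

lemma U_eps_eq:
  "U_eps n C0 s S \<epsilon> p = \<epsilon> powr (- (hdim n - 2 * s) / 2) / U_mass n C0 s powr (1 / crit_exp n s)
     * U_fun n C0 s (dil (S powr (- 1 / (2 * s)) / \<epsilon>) p)"
  by (simp add: U_eps_def ustar_def ubar_def U_mass_def dil_dil)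

lemma measurable_U_eps [measurable]: "U_eps n C0 s S \<epsilon> \<in> borel_measurable borel"
  unfolding U_eps_eq[abs_def] by measurable

lemma U_eps_powr_crit_exp:
  fixes \<epsilon> s S :: real
  assumes "0 < \<epsilon>" "0 < C0" "2 * s < hdim TYPE('n::finite)"
  defines "c \<equiv> S powr (- 1 / (2 * s)) / \<epsilon>"
  shows "\<bar>U_eps TYPE('n) C0 s S \<epsilon> p\<bar> powr crit_exp TYPE('n) s
           = \<epsilon> powr - hdim TYPE('n) / U_mass TYPE('n) C0 s
             * U_fun TYPE('n) C0 s (dil c p) powr crit_exp TYPE('n) s"
proof -
  let ?Q = "hdim TYPE('n)" and ?q = "crit_exp TYPE('n) s" and ?M = "U_mass TYPE('n) C0 s"
  have M: "0 < ?M" and q: "0 < ?q"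
    using U_mass_pos[OF assms(2,3)] crit_exp_pos[OF assms(3)] by simp_all
  have "- (?Q - 2 * s) / 2 * ?q = - ((?Q - 2 * s) * ?q) / 2"
    by (simp add: algebra_simps)
  also have "\<dots> = - ?Q"
    unfolding crit_exp_mult[OF assms(3)] by simp
  finally have "(\<epsilon> powr (- (?Q - 2 * s) / 2)) powr ?q = \<epsilon> powr - ?Q"
    by (simp only: powr_powr)
  moreover have "(?M powr (1 / ?q)) powr ?q = ?M"
    using M q by (simp add: powr_powr)
  ultimately show ?thesis
    using M
    by (simp add: U_eps_eq c_def abs_mult powr_mult powr_divide abs_of_pos[OF U_fun_pos[OF assms(2)]])
qed

lemma U_eps_sq:
  fixes \<epsilon> s S :: real
  assumes "0 < \<epsilon>"
  defines "c \<equiv> S powr (- 1 / (2 * s)) / \<epsilon>"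
  shows "(U_eps n C0 s S \<epsilon> p)\<^sup>2
           = \<epsilon> powr (2 * s - hdim n) / (U_mass n C0 s powr (1 / crit_exp n s))\<^sup>2
             * (U_fun n C0 s (dil c p))\<^sup>2"
proof -
  have "(\<epsilon> powr (- (hdim n - 2 * s) / 2))\<^sup>2 = \<epsilon> powr (2 * s - hdim n)"
    using assms(1) by (simp add: power2_eq_square flip: powr_add)
  then show ?thesis
    by (simp add: U_eps_eq c_def power_mult_distrib power_divide)
qed

lemma integral_U_eps_powr_crit_exp:
  fixes \<epsilon> s S :: real
  assumes "0 < \<epsilon>" "0 < s" "0 < C0" "0 < S" "2 * s < hdim TYPE('n::finite)"
  shows "integrable lborel (\<lambda>p :: 'n heis. \<bar>U_eps TYPE('n) C0 s S \<epsilon> p\<bar> powr crit_exp TYPE('n) s)"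
    and "(\<integral>p. \<bar>U_eps TYPE('n) C0 s S \<epsilon> p\<bar> powr crit_exp TYPE('n) s \<partial>lborel)
           = S powr (hdim TYPE('n) / (2 * s))"
proof -
  let ?Q = "hdim TYPE('n)" and ?q = "crit_exp TYPE('n) s" and ?M = "U_mass TYPE('n) C0 s"
  define c where "c = S powr (- 1 / (2 * s)) / \<epsilon>"
  have c: "0 < c"
    using assms by (simp add: c_def)
  have eq: "(\<lambda>p. \<bar>U_eps TYPE('n) C0 s S \<epsilon> p\<bar> powr ?q)
            = (\<lambda>p. \<epsilon> powr - ?Q / ?M * U_fun TYPE('n) C0 s (dil c p) powr ?q)"
    using U_eps_powr_crit_exp[OF assms(1,3,5)] by (simp add: c_def)
  show "integrable lborel (\<lambda>p :: 'n heis. \<bar>U_eps TYPE('n) C0 s S \<epsilon> p\<bar> powr ?q)"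
    unfolding eq using integrable_U_fun_powr_crit_exp[OF assms(3,5)] c
    by (simp add: integrable_dil_iff[where f = "\<lambda>p. U_fun TYPE('n) C0 s p powr ?q"])
  have "(\<integral>p. \<bar>U_eps TYPE('n) C0 s S \<epsilon> p\<bar> powr ?q \<partial>lborel) = \<epsilon> powr - ?Q / ?M * (c powr - ?Q * ?M)"
  proof -
    have "(\<integral>p. U_fun TYPE('n) C0 s (dil c p) powr ?q \<partial>lborel) = c powr - ?Q * ?M"
      unfolding U_mass_eq[OF assms(3)] using c by (intro integral_dil) auto
    then show ?thesis
      unfolding eq by simp
  qed
  also have "\<dots> = (\<epsilon> * c) powr - ?Q"
    using U_mass_pos[OF assms(3,5)] by (simp add: powr_mult)
  also have "\<dots> = S powr (?Q / (2 * s))"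
    using assms by (simp add: c_def powr_powr)
  finally show "(\<integral>p. \<bar>U_eps TYPE('n) C0 s S \<epsilon> p\<bar> powr ?q \<partial>lborel) = S powr (?Q / (2 * s))" .
qed

lemma U_eps_powr_outside_hball_le:
  fixes s S r :: real
  assumes "0 < s" "0 < C0" "0 < S" "2 * s < hdim TYPE('n::finite)" "0 < r"
  obtains K where "\<And>\<epsilon>. 0 < \<epsilon> \<Longrightarrow>
    (\<integral>p. \<bar>U_eps TYPE('n) C0 s S \<epsilon> p\<bar> powr crit_exp TYPE('n) s * indicator (- hball r) (p :: 'n heis)
      \<partial>lborel) \<le> K * \<epsilon> powr hdim TYPE('n)"
proof
  let ?Q = "hdim TYPE('n)" and ?q = "crit_exp TYPE('n) s" and ?M = "U_mass TYPE('n) C0 s"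
  let ?U = "U_fun TYPE('n) C0 s" and ?\<delta> = "S powr (- 1 / (2 * s))"
  let ?J = "\<integral>p. indicator (- hball 1) p * heis_norm (p :: 'n heis) powr - (2 * ?Q) \<partial>lborel"
  fix \<epsilon> :: real
  assume "0 < \<epsilon>"
  define c where "c = ?\<delta> / \<epsilon>"
  have c: "0 < c"
    using assms \<open>0 < \<epsilon>\<close> by (simp add: c_def)
  have M: "0 < ?M"
    using U_mass_pos[OF assms(2,4)] .
  have "(\<integral>p. \<bar>U_eps TYPE('n) C0 s S \<epsilon> p\<bar> powr ?q * indicator (- hball r) p \<partial>lborel)
        = \<epsilon> powr - ?Q / ?M * (\<integral>p. ?U (dil c p) powr ?q * indicator (- hball r) p \<partial>lborel)"
    using U_eps_powr_crit_exp[OF \<open>0 < \<epsilon>\<close> assms(2,4)] by (simp add: c_def mult.assoc)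
  also have "\<dots> = \<epsilon> powr - ?Q / ?M
                   * (c powr - ?Q * (\<integral>p. ?U p powr ?q * indicator (- hball (c * r)) p \<partial>lborel))"
    by (subst integral_dil_mult_indicator_hball(2)) (measurable, rule c, rule refl)
  also have "\<dots> \<le> \<epsilon> powr - ?Q / ?M * (c powr - ?Q * (C0 powr ?q * ?J * (c * r) powr - ?Q))"
    using integral_U_fun_powr_outside_hball_le[OF assms(2,4), of "c * r"] c assms(5) M
    by (intro mult_left_mono) auto
  also have "\<dots> = ?\<delta> powr - ?Q * C0 powr ?q * ?J * (?\<delta> * r) powr - ?Q / ?M * \<epsilon> powr ?Q"
    using \<open>0 < \<epsilon>\<close> assms by (simp add: c_def powr_divide powr_mult powr_minus field_simps)
  finally show "(\<integral>p. \<bar>U_eps TYPE('n) C0 s S \<epsilon> p\<bar> powr ?q * indicator (- hball r) p \<partial>lborel)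
      \<le> ?\<delta> powr - ?Q * C0 powr ?q * ?J * (?\<delta> * r) powr - ?Q / ?M * \<epsilon> powr ?Q" .
qed

lemma integral_u_eps_powr_crit_exp_bigo:
  fixes s S r :: real and \<phi> :: "'n::finite heis \<Rightarrow> real"
  assumes "0 < s" "2 * s < hdim TYPE('n)" "0 < C0" "0 < S" "0 < r"
    and [measurable]: "\<phi> \<in> borel_measurable borel"
    and "\<And>p. 0 \<le> \<phi> p \<and> \<phi> p \<le> 1" "\<And>p. p \<in> hball r \<Longrightarrow> \<phi> p = 1"
  shows "(\<lambda>\<epsilon>. integral\<^sup>L lborel (\<lambda>p. \<bar>u_eps TYPE('n) C0 s S \<phi> \<epsilon> p\<bar> powr crit_exp TYPE('n) s)
               - S powr (hdim TYPE('n) / (2 * s)))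
           \<in> O[at_right 0](\<lambda>\<epsilon>. \<epsilon> powr hdim TYPE('n))"
proof -
  let ?q = "crit_exp TYPE('n) s"
  obtain K where K: "\<And>\<epsilon>. 0 < \<epsilon> \<Longrightarrow>
      (\<integral>p. \<bar>U_eps TYPE('n) C0 s S \<epsilon> p\<bar> powr ?q * indicator (- hball r) p \<partial>lborel)
        \<le> K * \<epsilon> powr hdim TYPE('n)"
    using U_eps_powr_outside_hball_le[OF assms(1,3,4,2,5)] by blast
  have "\<bar>integral\<^sup>L lborel (\<lambda>p. \<bar>u_eps TYPE('n) C0 s S \<phi> \<epsilon> p\<bar> powr ?q) - S powr (hdim TYPE('n) / (2 * s))\<bar>
        \<le> K * \<epsilon> powr hdim TYPE('n)" if "0 < \<epsilon>" for \<epsilon>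
  proof -
    let ?F = "\<lambda>p. \<bar>U_eps TYPE('n) C0 s S \<epsilon> p\<bar> powr ?q"
    have q: "0 < ?q"
      using crit_exp_pos[OF assms(2)] .
    have "(\<lambda>p. \<bar>u_eps TYPE('n) C0 s S \<phi> \<epsilon> p\<bar> powr ?q) = (\<lambda>p. ?F p * \<phi> p powr ?q)"
      using assms(7) by (simp add: u_eps_def abs_mult powr_mult)
    moreover have "\<bar>(\<integral>p. ?F p * \<phi> p powr ?q \<partial>lborel) - integral\<^sup>L lborel ?F\<bar>
        \<le> (\<integral>p. ?F p * indicator (- hball r) p \<partial>lborel)"
    proof (rule integral_mult_cutoff_diff_le)
      show "integrable lborel ?F"
        by (rule integral_U_eps_powr_crit_exp(1)[OF that assms(1,3,4,2)])
      show "\<phi> p powr ?q \<le> 1" for p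
        using assms(7)[of p] q by (simp add: powr_le1)
    qed (use assms(7,8) in auto)
    ultimately show ?thesis
      using integral_U_eps_powr_crit_exp(2)[OF that assms(1,3,4,2)] K[OF that] by simp
  qed
  then show ?thesis
    by (intro bigoI[where c = K] eventually_at_rightI[where b = 1]) auto
qed

lemma U_eps_sq_le:
  assumes "0 < \<epsilon>" "0 < C0" "2 * s \<le> hdim n"
  shows "(U_eps n C0 s S \<epsilon> p)\<^sup>2 \<le> \<epsilon> powr (2 * s - hdim n) / (U_mass n C0 s powr (1 / crit_exp n s))\<^sup>2 * C0\<^sup>2"
proof -
  let ?U = "U_fun n C0 s (dil (S powr (- 1 / (2 * s)) / \<epsilon>) p)"
  have "?U\<^sup>2 \<le> C0\<^sup>2"
    by (rule U_fun_sq_le[OF assms(2,3)])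
  then show ?thesis
    unfolding U_eps_sq[OF assms(1)] by (intro mult_left_mono) auto
qed

lemma integral_U_eps_sq_hball_le:
  fixes s S r :: real and \<phi> :: "'n::finite heis \<Rightarrow> real"
  assumes "0 < \<epsilon>" "0 < C0" "2 * s \<le> hdim TYPE('n)"
    and [measurable]: "\<phi> \<in> borel_measurable borel"
    and "\<And>p. 0 \<le> \<phi> p \<and> \<phi> p \<le> 1" "\<And>p. p \<in> hball r \<Longrightarrow> \<phi> p = 1"
    and "\<And>p. p \<notin> hball (2 * r) \<Longrightarrow> \<phi> p = 0"
  shows "(\<integral>p. (U_eps TYPE('n) C0 s S \<epsilon> p)\<^sup>2 * indicator (hball r) p \<partial>lborel)
           \<le> integral\<^sup>L lborel (\<lambda>p. \<bar>u_eps TYPE('n) C0 s S \<phi> \<epsilon> p\<bar>\<^sup>2)"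
proof (rule integral_mono)
  let ?B = "\<epsilon> powr (2 * s - hdim TYPE('n)) / (U_mass TYPE('n) C0 s powr (1 / crit_exp TYPE('n) s))\<^sup>2 * C0\<^sup>2"
  note U_eps_le = U_eps_sq_le[OF assms(1-3), where S = S]
  have "0 \<le> ?B"
    by simp
  show "integrable lborel (\<lambda>p. (U_eps TYPE('n) C0 s S \<epsilon> p)\<^sup>2 * indicator (hball r) p)"
  proof (rule integrable_bounded_on_hball[where R = r])
    show "\<bar>(U_eps TYPE('n) C0 s S \<epsilon> p)\<^sup>2 * indicator (hball r) p\<bar> \<le> ?B" for p
      using U_eps_le[of p] \<open>0 \<le> ?B\<close> by (simp add: indicator_def)
  qed simp_all
  show "integrable lborel (\<lambda>p. \<bar>u_eps TYPE('n) C0 s S \<phi> \<epsilon> p\<bar>\<^sup>2)"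
  proof (rule integrable_bounded_on_hball[where R = "2 * r"])
    show "\<bar>\<bar>u_eps TYPE('n) C0 s S \<phi> \<epsilon> p\<bar>\<^sup>2\<bar> \<le> ?B" for p
    proof -
      have "(\<phi> p)\<^sup>2 \<le> 1"
        using assms(5)[of p] by (simp add: power_le_one)
      then have "(U_eps TYPE('n) C0 s S \<epsilon> p)\<^sup>2 * (\<phi> p)\<^sup>2 \<le> (U_eps TYPE('n) C0 s S \<epsilon> p)\<^sup>2"
        by (simp add: mult_left_le)
      then show ?thesis
        using U_eps_le[of p] by (simp add: u_eps_def power_mult_distrib)
    qed
  qed (use assms(7) in \<open>simp_all add: u_eps_def\<close>)
  show "(U_eps TYPE('n) C0 s S \<epsilon> p)\<^sup>2 * indicator (hball r) p \<le> \<bar>u_eps TYPE('n) C0 s S \<phi> \<epsilon> p\<bar>\<^sup>2" for p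
    using assms(6)[of p] by (auto simp: u_eps_def indicator_def power_mult_distrib)
qed

lemma integral_U_eps_sq_hball_ge:
  fixes s S r :: real
  assumes "0 < \<epsilon>" "\<epsilon> < 1" "0 < C0" "0 < S" "0 < r" "2 * s \<le> hdim TYPE('n::finite)"
  defines "\<delta> \<equiv> S powr (- 1 / (2 * s))"
  shows "\<delta> powr - hdim TYPE('n) / (U_mass TYPE('n) C0 s powr (1 / crit_exp TYPE('n) s))\<^sup>2
           * (\<integral>p. (U_fun TYPE('n) C0 s p)\<^sup>2 * indicator (hball (\<delta> * r)) p \<partial>lborel) * \<epsilon> powr (2 * s)
         \<le> (\<integral>p. (U_eps TYPE('n) C0 s S \<epsilon> p)\<^sup>2 * indicator (hball r) (p :: 'n heis) \<partial>lborel)"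
proof -
  let ?Q = "hdim TYPE('n)" and ?U = "U_fun TYPE('n) C0 s"
  let ?\<kappa> = "(U_mass TYPE('n) C0 s powr (1 / crit_exp TYPE('n) s))\<^sup>2"
  let ?G = "\<lambda>R. \<integral>p. (?U p)\<^sup>2 * indicator (hball R) (p :: 'n heis) \<partial>lborel"
  define c where "c = \<delta> / \<epsilon>"
  have c: "0 < c" "\<delta> \<le> c"
    using assms by (simp_all add: \<delta>_def c_def field_simps)
  have "c powr - ?Q = \<delta> powr - ?Q / \<epsilon> powr - ?Q"
    unfolding c_def using assms(1) by (intro powr_divide; simp add: \<delta>_def)
  also have "\<dots> = \<delta> powr - ?Q * \<epsilon> powr ?Q"
    by (simp add: powr_minus_divide)
  finally have "c powr - ?Q = \<delta> powr - ?Q * \<epsilon> powr ?Q" .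
  moreover have "\<epsilon> powr (2 * s) = \<epsilon> powr (2 * s - ?Q) * \<epsilon> powr ?Q"
    by (subst powr_add[symmetric]) simp
  ultimately have "\<delta> powr - ?Q / ?\<kappa> * ?G (\<delta> * r) * \<epsilon> powr (2 * s)
                   = \<epsilon> powr (2 * s - ?Q) / ?\<kappa> * (c powr - ?Q * ?G (\<delta> * r))"
    by (simp only:) (simp add: ac_simps)
  also have "\<dots> \<le> \<epsilon> powr (2 * s - ?Q) / ?\<kappa> * (c powr - ?Q * ?G (c * r))"
    using c(2) assms(3,5,6)
    by (intro mult_left_mono integral_U_fun_sq_hball_mono mult_right_mono) simp_all
  also have "\<dots> = \<epsilon> powr (2 * s - ?Q) / ?\<kappa> * (\<integral>p. (?U (dil c p))\<^sup>2 * indicator (hball r) p \<partial>lborel)"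
    by (subst integral_dil_mult_indicator_hball(1)) (measurable, rule c, rule refl)
  also have "\<dots> = (\<integral>p. (U_eps TYPE('n) C0 s S \<epsilon> p)\<^sup>2 * indicator (hball r) p \<partial>lborel)"
  proof -
    have "(U_eps TYPE('n) C0 s S \<epsilon> p)\<^sup>2 = \<epsilon> powr (2 * s - ?Q) / ?\<kappa> * (?U (dil c p))\<^sup>2" for p
      using U_eps_sq[OF assms(1)] by (simp add: \<delta>_def c_def)
    then show ?thesis
      by (simp add: mult.assoc)
  qed
  finally show ?thesis .
qed

lemma integral_u_eps_sq_lower_bound:
  fixes s S r :: real and \<phi> :: "'n::finite heis \<Rightarrow> real"
  assumes "0 < s" "2 * s < hdim TYPE('n)" "0 < C0" "0 < S" "0 < r"
    and [measurable]: "\<phi> \<in> borel_measurable borel"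
    and "\<And>p. 0 \<le> \<phi> p \<and> \<phi> p \<le> 1" "\<And>p. p \<in> hball r \<Longrightarrow> \<phi> p = 1"
    and "\<And>p. p \<notin> hball (2 * r) \<Longrightarrow> \<phi> p = 0"
  shows "\<exists>C>0. \<forall>\<^sub>F \<epsilon> in at_right 0.
           C * \<epsilon> powr (2 * s) \<le> integral\<^sup>L lborel (\<lambda>p. \<bar>u_eps TYPE('n) C0 s S \<phi> \<epsilon> p\<bar>\<^sup>2)"
proof -
  let ?U = "U_fun TYPE('n) C0 s" and ?\<delta> = "S powr (- 1 / (2 * s))"
  define C where "C = ?\<delta> powr - hdim TYPE('n) / (U_mass TYPE('n) C0 s powr (1 / crit_exp TYPE('n) s))\<^sup>2
    * (\<integral>p. (?U p)\<^sup>2 * indicator (hball (?\<delta> * r)) p \<partial>lborel)"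
  have "0 < (\<integral>p. (?U p)\<^sup>2 * indicator (hball (?\<delta> * r)) p \<partial>lborel)"
  proof (rule integral_pos_if_pos_on[where A = "hball (?\<delta> * r)"])
    show "integrable lborel (\<lambda>p. (?U p)\<^sup>2 * indicator (hball (?\<delta> * r)) p)"
      using assms(2,3) by (intro integrable_U_fun_sq_hball) simp_all
    show "0 < emeasure lborel (hball (?\<delta> * r) :: 'n heis set)"
      using assms(4,5) by (intro emeasure_hball_pos) simp
    show "0 < (?U p)\<^sup>2 * indicator (hball (?\<delta> * r)) p" if "p \<in> hball (?\<delta> * r)" for p
      using that U_fun_pos[OF assms(3), of "TYPE('n)" s p] by simp
  qed simp_all
  then have "0 < C"
    using U_mass_pos[OF assms(3,2)] assms(4) by (simp add: C_def)
  moreover have "\<forall>\<^sub>F \<epsilon> in at_right 0.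
      C * \<epsilon> powr (2 * s) \<le> integral\<^sup>L lborel (\<lambda>p. \<bar>u_eps TYPE('n) C0 s S \<phi> \<epsilon> p\<bar>\<^sup>2)"
  proof (rule eventually_at_rightI[where b = 1])
    fix \<epsilon> :: real
    assume "\<epsilon> \<in> {0<..<1}"
    then show "C * \<epsilon> powr (2 * s) \<le> integral\<^sup>L lborel (\<lambda>p. \<bar>u_eps TYPE('n) C0 s S \<phi> \<epsilon> p\<bar>\<^sup>2)"
      using integral_U_eps_sq_hball_ge[of \<epsilon> C0 S r s, where 'n = 'n] assms(2-5)
        integral_U_eps_sq_hball_le[of \<epsilon> C0 s \<phi> r S] assms(6-9)
      unfolding C_def by fastforce
  qed simp
  ultimately show ?thesis
    by blast
qed

theorem lemma3p15:
  fixes s C0 S r :: real and \<Omega> :: "'n::finite heis set" and \<phi> :: "'n heis \<Rightarrow> real"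
  assumes "0 < s" "s < 1" "0 < C0" "0 < S"
    and "bounded \<Omega>" "open \<Omega>" "0 < r" "hball (4 * r) \<subseteq> \<Omega>"
    and "smooth_fun \<phi>" "\<And>p. 0 \<le> \<phi> p \<and> \<phi> p \<le> 1"
    and "\<And>p. p \<in> hball r \<Longrightarrow> \<phi> p = 1"
    and "\<And>p. p \<notin> hball (2 * r) \<Longrightarrow> \<phi> p = 0"
  shows "(\<exists>C>0. \<exists>g :: real \<Rightarrow> real.
            g \<in> O[at_right 0](\<lambda>\<epsilon>. \<epsilon> powr (hdim TYPE('n) - 4 * s)) \<and>
            (\<forall>\<^sub>F \<epsilon> in at_right 0.
               integral\<^sup>L lborel (\<lambda>p. \<bar>u_eps TYPE('n) C0 s S \<phi> \<epsilon> p\<bar>\<^sup>2)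
                 \<ge> g \<epsilon> + C * \<epsilon> powr (2 * s))) \<and>
         ((\<lambda>\<epsilon>. integral\<^sup>L lborel (\<lambda>p. \<bar>u_eps TYPE('n) C0 s S \<phi> \<epsilon> p\<bar> powr crit_exp TYPE('n) s)
               - S powr (hdim TYPE('n) / (2 * s)))
           \<in> O[at_right 0](\<lambda>\<epsilon>. \<epsilon> powr hdim TYPE('n)))"
proof (intro conjI)
  have s: "2 * s < hdim TYPE('n)"
    using assms(2) hdim_ge_4[where 'n = 'n] by linarith
  note \<phi> = measurable_smooth_fun[OF assms(9)]
  obtain C where "0 < C" and lower: "\<forall>\<^sub>F \<epsilon> in at_right 0.
      C * \<epsilon> powr (2 * s) \<le> integral\<^sup>L lborel (\<lambda>p. \<bar>u_eps TYPE('n) C0 s S \<phi> \<epsilon> p\<bar>\<^sup>2)"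
    using integral_u_eps_sq_lower_bound[OF assms(1) s assms(3,4,7) \<phi>] assms(10-12) by blast
  then show "\<exists>C>0. \<exists>g :: real \<Rightarrow> real.
      g \<in> O[at_right 0](\<lambda>\<epsilon>. \<epsilon> powr (hdim TYPE('n) - 4 * s)) \<and>
      (\<forall>\<^sub>F \<epsilon> in at_right 0.
         integral\<^sup>L lborel (\<lambda>p. \<bar>u_eps TYPE('n) C0 s S \<phi> \<epsilon> p\<bar>\<^sup>2) \<ge> g \<epsilon> + C * \<epsilon> powr (2 * s))"
    by (intro exI[of _ C] conjI exI[of _ "\<lambda>_. 0"]) auto
  show "(\<lambda>\<epsilon>. integral\<^sup>L lborel (\<lambda>p. \<bar>u_eps TYPE('n) C0 s S \<phi> \<epsilon> p\<bar> powr crit_exp TYPE('n) s)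
          - S powr (hdim TYPE('n) / (2 * s))) \<in> O[at_right 0](\<lambda>\<epsilon>. \<epsilon> powr hdim TYPE('n))"
    by (rule integral_u_eps_powr_crit_exp_bigo[OF assms(1) s assms(3,4,7) \<phi>])
       (simp_all add: assms(10,11))
qed

end
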